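(* Let $n\ge 4$ and let $G$ be a graph having the maximum value of $cM_2$ among all connected graphs of order $n$. Then the maximum degree of $G$ is $n-1$.
   Context: All graphs are finite and simple. For a graph $G$ and a vertex $u$, $d_u(G)$ denotes the degree of $u$ in $G$. The complementary second Zagreb index of $G$ is $cM_2(G)=\sum_{uv\in E(G)}\left|(d_u(G))^2-(d_v(G))^2\right|$. *)

theory Defs
  imports Main
begin

definition simple_graph :: "'a set \<Rightarrow> 'a set set \<Rightarrow> bool" where
  "simple_graph V E \<longleftrightarrow> finite V \<and>
     (\<forall>e\<in>E. \<exists>u v. e = {u, v} \<and> u \<noteq> v \<and> u \<in> V \<and> v \<in> V)"

definition degree :: "'a set set \<Rightarrow> 'a \<Rightarrow> nat" where
  "degree E u = card {e\<in>E. u \<in> e}"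

definition adj :: "'a set set \<Rightarrow> 'a \<Rightarrow> 'a \<Rightarrow> bool" where
  "adj E u v \<longleftrightarrow> {u, v} \<in> E"

definition is_walk :: "'a set set \<Rightarrow> 'a list \<Rightarrow> bool" where
  "is_walk E xs \<longleftrightarrow> xs \<noteq> [] \<and> (\<forall>i. Suc i < length xs \<longrightarrow> adj E (xs ! i) (xs ! Suc i))"

definition connected_graph :: "'a set \<Rightarrow> 'a set set \<Rightarrow> bool" where
  "connected_graph V E \<longleftrightarrow> V \<noteq> {} \<and>
     (\<forall>u\<in>V. \<forall>v\<in>V. \<exists>xs. is_walk E xs \<and> hd xs = u \<and> last xs = v)"

(* complementary second Zagreb index: sum over edges uv of |d_u^2 - d_v^2| *)
definition cM2 :: "'a set set \<Rightarrow> nat" where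
  "cM2 E = (\<Sum>e\<in>E. Max {(degree E u)^2 - (degree E v)^2 | u v. e = {u, v}})"

definition max_degree :: "'a set \<Rightarrow> 'a set set \<Rightarrow> nat" where
  "max_degree V E = Max (degree E ` V)"

end

theory Submission
  imports Defs
begin

text \<open>Let \<open>u\<close> be a vertex of maximum degree \<open>\<Delta>\<close> and suppose some \<open>w \<noteq> u\<close> is not adjacent
  to \<open>u\<close>. Adding the edge \<open>uw\<close> raises \<open>cM\<^sub>2\<close>: each edge \<open>ux\<close> gains exactly \<open>2\<Delta> + 1\<close>
  because \<open>d\<^sub>x \<le> \<Delta>\<close>, while each old edge \<open>wy\<close> loses at most \<open>2d\<^sub>w + 1\<close>, and nothing if
  \<open>d\<^sub>w = \<Delta>\<close>. So the total gain \<open>\<Delta>(2\<Delta> + 1)\<close> exceeds the total loss, which is at most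
  \<open>d\<^sub>w(2d\<^sub>w + 1)\<close> when \<open>d\<^sub>w < \<Delta>\<close> (connectedness gives \<open>\<Delta> > 0\<close>). As \<open>cM\<^sub>2\<close> is invariant under
  relabelling, a copy of the enlarged graph on natural numbers contradicts maximality.\<close>

lemma simple_graph_finite_vertices: "simple_graph V E \<Longrightarrow> finite V"
  unfolding simple_graph_def by simp

lemma simple_graph_edgeE:
  assumes "simple_graph V E" "e \<in> E"
  obtains a b where "e = {a, b}" "a \<noteq> b" "a \<in> V" "b \<in> V"
  using assms unfolding simple_graph_def by blast

lemma simple_graph_edge_at_vertexE:
  assumes "simple_graph V E" "e \<in> E" "x \<in> e"
  obtains y where "e = {x, y}" "y \<noteq> x" "y \<in> V"
  using assms by (elim simple_graph_edgeE) auto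

lemma simple_graph_edge_subset: "simple_graph V E \<Longrightarrow> e \<in> E \<Longrightarrow> e \<subseteq> V"
  by (elim simple_graph_edgeE) auto

lemma simple_graph_finite_edges:
  assumes "simple_graph V E"
  shows "finite E"
proof (rule finite_subset)
  show "E \<subseteq> Pow V" using assms simple_graph_edge_subset by blast
  show "finite (Pow V)" using assms by (simp add: simple_graph_finite_vertices)
qed

lemma simple_graph_insert_edge:
  "simple_graph V E \<Longrightarrow> u \<in> V \<Longrightarrow> w \<in> V \<Longrightarrow> u \<noteq> w \<Longrightarrow> simple_graph V (insert {u, w} E)"
  unfolding simple_graph_def by blast

lemma connected_graph_mono:
  assumes "connected_graph V E" "E \<subseteq> E'"
  shows "connected_graph V E'"
proof -
  have "is_walk E' xs" if "is_walk E xs" for xs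
    using that assms(2) unfolding is_walk_def adj_def by blast
  then show ?thesis using assms(1) unfolding connected_graph_def by blast
qed

lemma connected_graph_degree_pos:
  assumes "connected_graph V E" "finite E" "u \<in> V" "w \<in> V" "u \<noteq> w"
  shows "0 < degree E u"
proof -
  obtain xs where xs: "is_walk E xs" "hd xs = u" "last xs = w"
    using assms unfolding connected_graph_def by blast
  have "xs \<noteq> []" using xs(1) unfolding is_walk_def by simp
  have "Suc 0 < length xs"
  proof (rule ccontr)
    assume "\<not> Suc 0 < length xs"
    with \<open>xs \<noteq> []\<close> obtain x where "xs = [x]" by (cases xs) auto
    with xs assms(5) show False by simp
  qed
  then have "{xs ! 0, xs ! 1} \<in> E" using xs(1) unfolding is_walk_def adj_def by simp
  moreover have "xs ! 0 = u" using xs(2) \<open>xs \<noteq> []\<close> by (simp add: hd_conv_nth)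
  ultimately have "{e \<in> E. u \<in> e} \<noteq> {}" by auto
  then show ?thesis unfolding degree_def using assms(2) by (simp add: card_gt_0_iff)
qed

lemma edges_at_vertex_subset:
  assumes "simple_graph V E"
  shows "{e \<in> E. x \<in> e} \<subseteq> (\<lambda>y. {x, y}) ` (V - {x})"
  using assms by (auto elim!: simple_graph_edge_at_vertexE)

lemma card_doubletons_at_vertex:
  assumes "finite V" "x \<in> V"
  shows "card ((\<lambda>y. {x, y}) ` (V - {x})) = card V - 1"
proof -
  have "inj_on (\<lambda>y. {x, y}) (V - {x})" by (rule inj_onI) (auto simp: doubleton_eq_iff)
  then show ?thesis using assms by (simp add: card_image)
qed

lemma degree_eq_card_minus_one:
  assumes "simple_graph V E" "x \<in> V" "\<forall>w \<in> V - {x}. {x, w} \<in> E"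
  shows "degree E x = card V - 1"
proof -
  have "{e \<in> E. x \<in> e} = (\<lambda>y. {x, y}) ` (V - {x})"
    using edges_at_vertex_subset[OF assms(1)] assms(3) by blast
  then show ?thesis unfolding degree_def
    using assms by (simp add: simple_graph_finite_vertices card_doubletons_at_vertex)
qed

lemma max_degree_attained:
  assumes "finite V" "V \<noteq> {}"
  obtains u where "u \<in> V" "max_degree V E = degree E u" "\<forall>x \<in> V. degree E x \<le> degree E u"
proof -
  have "Max (degree E ` V) \<in> degree E ` V" using assms by (intro Max_in) auto
  then obtain u where "u \<in> V" "max_degree V E = degree E u"
    unfolding max_degree_def by auto
  then show ?thesis using that assms unfolding max_degree_def by (metis Max_ge finite_imageI imageI)
qed

lemma degree_insert_edge:
  assumes "finite E" "{u, w} \<notin> E"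
  shows "degree (insert {u, w} E) x = (if x \<in> {u, w} then degree E x + 1 else degree E x)"
proof (cases "x \<in> {u, w}")
  case True
  then have "{e \<in> insert {u, w} E. x \<in> e} = insert {u, w} {e \<in> E. x \<in> e}" by auto
  then show ?thesis using True assms unfolding degree_def by simp
next
  case False
  then have "{e \<in> insert {u, w} E. x \<in> e} = {e \<in> E. x \<in> e}" by auto
  then show ?thesis using False unfolding degree_def by simp
qed

definition edge_weight :: "'a set set \<Rightarrow> 'a set \<Rightarrow> nat" where
  "edge_weight E e = Max {(degree E u)^2 - (degree E v)^2 | u v. e = {u, v}}"

lemma cM2_eq_sum_edge_weight: "cM2 E = (\<Sum>e \<in> E. edge_weight E e)"
  unfolding cM2_def edge_weight_def ..

lemma edge_weight_doubleton:
  "int (edge_weight E {a, b}) = \<bar>int (degree E a)^2 - int (degree E b)^2\<bar>"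
proof -
  have "{(degree E u)^2 - (degree E v)^2 | u v. {a, b} = {u, v}} =
        {(degree E a)^2 - (degree E b)^2, (degree E b)^2 - (degree E a)^2}"
    by (auto simp: doubleton_eq_iff)
  moreover have "int (max (p - q) (q - p)) = \<bar>int p - int q\<bar>" for p q :: nat
    by (simp add: max_def)
  ultimately show ?thesis unfolding edge_weight_def by simp
qed

lemma simple_graph_image:
  assumes "simple_graph V E" "inj_on f V"
  shows "simple_graph (f ` V) ((`) f ` E)"
  unfolding simple_graph_def
proof (intro conjI ballI)
  show "finite (f ` V)" using assms(1) by (simp add: simple_graph_finite_vertices)
next
  fix e' assume "e' \<in> (`) f ` E"
  then obtain a b where "e' = {f a, f b}" "a \<noteq> b" "a \<in> V" "b \<in> V"
    using assms(1) by (auto elim!: simple_graph_edgeE)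
  with assms(2) show "\<exists>u v. e' = {u, v} \<and> u \<noteq> v \<and> u \<in> f ` V \<and> v \<in> f ` V"
    by (metis image_eqI inj_on_eq_iff)
qed

lemma connected_graph_image:
  assumes "connected_graph V E"
  shows "connected_graph (f ` V) ((`) f ` E)"
proof -
  have "{f a, f b} \<in> (`) f ` E" if "{a, b} \<in> E" for a b
    using that by (metis image_empty image_insert imageI)
  then have walk: "is_walk ((`) f ` E) (map f xs)" if "is_walk E xs" for xs
    using that unfolding is_walk_def adj_def by simp
  show ?thesis
    unfolding connected_graph_def
  proof (intro conjI ballI)
    show "f ` V \<noteq> {}" using assms unfolding connected_graph_def by simp
  next
    fix u' v' assume "u' \<in> f ` V" "v' \<in> f ` V"
    then obtain u v where "u \<in> V" "v \<in> V" "u' = f u" "v' = f v" by blast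
    then obtain xs where xs: "is_walk E xs" "hd xs = u" "last xs = v"
      using assms unfolding connected_graph_def by blast
    then have "hd (map f xs) = u'" "last (map f xs) = v'"
      using \<open>u' = f u\<close> \<open>v' = f v\<close> unfolding is_walk_def by (auto simp: hd_map last_map)
    then show "\<exists>xs. is_walk ((`) f ` E) xs \<and> hd xs = u' \<and> last xs = v'"
      using walk[OF xs(1)] by blast
  qed
qed

lemma inj_on_image_edges:
  assumes "simple_graph V E" "inj_on f V"
  shows "inj_on ((`) f) E"
proof (rule inj_onI)
  fix e e' assume "e \<in> E" "e' \<in> E" "f ` e = f ` e'"
  then show "e = e'"
    using inj_on_image_eq_iff[OF assms(2)] simple_graph_edge_subset[OF assms(1)] by blast
qed

lemma degree_image:
  assumes "simple_graph V E" "inj_on f V" "x \<in> V"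
  shows "degree ((`) f ` E) (f x) = degree E x"
proof -
  have "f x \<in> f ` e \<longleftrightarrow> x \<in> e" if "e \<in> E" for e
    using simple_graph_edge_subset[OF assms(1) that] assms(2,3) by (auto simp: inj_on_eq_iff)
  then have "{e' \<in> (`) f ` E. f x \<in> e'} = (`) f ` {e \<in> E. x \<in> e}" by auto
  moreover have "inj_on ((`) f) {e \<in> E. x \<in> e}"
    using inj_on_image_edges[OF assms(1,2)] by (rule inj_on_subset) auto
  ultimately show ?thesis unfolding degree_def by (simp add: card_image)
qed

lemma cM2_image:
  assumes "simple_graph V E" "inj_on f V"
  shows "cM2 ((`) f ` E) = cM2 E"
proof -
  have "edge_weight ((`) f ` E) (f ` e) = edge_weight E e" if "e \<in> E" for e
  proof -
    obtain a b where "e = {a, b}" "a \<in> V" "b \<in> V"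
      using assms(1) \<open>e \<in> E\<close> by (elim simple_graph_edgeE)
    then have "int (edge_weight ((`) f ` E) (f ` e)) = int (edge_weight E e)"
      by (simp add: edge_weight_doubleton degree_image[OF assms])
    then show ?thesis by simp
  qed
  then show ?thesis
    unfolding cM2_eq_sum_edge_weight using inj_on_image_edges[OF assms]
    by (simp add: sum.reindex)
qed

lemma abs_square_diff_succ:
  fixes x y :: int
  assumes "0 \<le> y" "y \<le> x"
  shows "\<bar>(x + 1)^2 - y^2\<bar> = \<bar>x^2 - y^2\<bar> + (2 * x + 1)"
proof -
  have "y^2 \<le> x^2" using assms by (simp add: power_mono)
  moreover have "(x + 1)^2 = x^2 + 2 * x + 1" by algebra
  ultimately show ?thesis using assms by arith
qed

lemma abs_square_diff_succ_ge:
  fixes x y :: int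
  assumes "0 \<le> x"
  shows "\<bar>x^2 - y^2\<bar> - (2 * x + 1) \<le> \<bar>(x + 1)^2 - y^2\<bar>"
proof -
  have "(x + 1)^2 = x^2 + 2 * x + 1" by algebra
  then show ?thesis using assms by arith
qed

lemma edge_weight_insert_edge_at_endpoint:
  assumes "finite E" "{u, w} \<notin> E" "x \<in> {u, w}" "y \<notin> {u, w}"
  shows "int (edge_weight (insert {u, w} E) {x, y}) = \<bar>(int (degree E x) + 1)^2 - int (degree E y)^2\<bar>"
  using assms by (simp add: edge_weight_doubleton degree_insert_edge) (simp add: add.commute)

lemma edge_weight_insert_edge_away:
  assumes "finite E" "{u, w} \<notin> E" "x \<notin> {u, w}" "y \<notin> {u, w}"
  shows "edge_weight (insert {u, w} E) {x, y} = edge_weight E {x, y}"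
proof -
  have "int (edge_weight (insert {u, w} E) {x, y}) = int (edge_weight E {x, y})"
    using assms by (simp add: edge_weight_doubleton degree_insert_edge)
  then show ?thesis by simp
qed

lemma sum_if_mem_edge:
  "finite E \<Longrightarrow> (\<Sum>e \<in> E. if x \<in> e then k else 0) = of_nat (degree E x) * k"
  unfolding degree_def by (simp add: sum.inter_filter[symmetric])

context
  fixes V :: "'a set" and E :: "'a set set" and u w :: 'a
  assumes graph: "simple_graph V E" and "w \<in> V" and "u \<noteq> w" and non_edge: "{u, w} \<notin> E"
    and max_at_u: "\<forall>x \<in> V. degree E x \<le> degree E u"
begin

lemma edge_weight_insert_edge_gain_at_max:
  assumes "e \<in> E" "u \<in> e"
  shows "int (edge_weight (insert {u, w} E) e) = int (edge_weight E e) + (2 * int (degree E u) + 1)"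
proof -
  obtain y where y: "e = {u, y}" "y \<noteq> u" "y \<in> V"
    using graph assms by (elim simple_graph_edge_at_vertexE)
  with assms non_edge have "y \<noteq> w" by auto
  have "int (edge_weight (insert {u, w} E) e) = \<bar>(int (degree E u) + 1)^2 - int (degree E y)^2\<bar>"
    using y \<open>y \<noteq> w\<close> non_edge simple_graph_finite_edges[OF graph]
    by (simp add: edge_weight_insert_edge_at_endpoint)
  also have "\<dots> = int (edge_weight E e) + (2 * int (degree E u) + 1)"
    using max_at_u y by (simp add: abs_square_diff_succ edge_weight_doubleton)
  finally show ?thesis .
qed

lemma edge_weight_insert_edge_loss_at_other:
  assumes "e \<in> E" "w \<in> e" "u \<notin> e"
  shows "int (edge_weight E e) - (if degree E w = degree E u then 0 else 2 * int (degree E w) + 1)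
    \<le> int (edge_weight (insert {u, w} E) e)"
proof -
  obtain y where y: "e = {w, y}" "y \<noteq> w" "y \<in> V"
    using graph assms by (elim simple_graph_edge_at_vertexE)
  with assms have "y \<noteq> u" by auto
  have new: "int (edge_weight (insert {u, w} E) e) = \<bar>(int (degree E w) + 1)^2 - int (degree E y)^2\<bar>"
    using y \<open>y \<noteq> u\<close> non_edge simple_graph_finite_edges[OF graph]
    by (simp add: edge_weight_insert_edge_at_endpoint)
  show ?thesis
  proof (cases "degree E w = degree E u")
    case True
    then show ?thesis using new max_at_u y by (simp add: abs_square_diff_succ edge_weight_doubleton)
  next
    case False
    then show ?thesis using new y by (simp add: abs_square_diff_succ_ge edge_weight_doubleton)
  qed
qed

lemma edge_weight_insert_edge_unchanged:
  assumes "e \<in> E" "u \<notin> e" "w \<notin> e"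
  shows "edge_weight (insert {u, w} E) e = edge_weight E e"
proof -
  obtain x y where "e = {x, y}" using graph assms(1) by (elim simple_graph_edgeE)
  then show ?thesis
    using assms non_edge simple_graph_finite_edges[OF graph] by (auto intro: edge_weight_insert_edge_away)
qed

lemma cM2_insert_edge_at_max_degree:
  assumes "0 < degree E u"
  shows "cM2 E < cM2 (insert {u, w} E)"
proof -
  have fin: "finite E" using graph by (rule simple_graph_finite_edges)
  define d where "d = int (degree E u)"
  define d' where "d' = int (degree E w)"
  define c where "c = (if degree E w = degree E u then 0 else 2 * d' + 1)"
  define g where "g e = (if u \<in> e then 2 * d + 1 else 0) - (if w \<in> e then c else 0)" for e :: "'a set"
  have gain: "int (edge_weight E e) + g e \<le> int (edge_weight (insert {u, w} E) e)" if e: "e \<in> E" for e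
  proof -
    have "\<not> (u \<in> e \<and> w \<in> e)"
    proof
      assume "u \<in> e \<and> w \<in> e"
      moreover obtain x y where "e = {x, y}" using graph e by (elim simple_graph_edgeE)
      ultimately have "e = {u, w}" using \<open>u \<noteq> w\<close> by auto
      then show False using e non_edge by simp
    qed
    then consider "u \<in> e" "w \<notin> e" | "w \<in> e" "u \<notin> e" | "u \<notin> e" "w \<notin> e" by blast
    then show ?thesis
    proof cases
      case 1
      then show ?thesis using edge_weight_insert_edge_gain_at_max[OF e] unfolding g_def d_def by simp
    next
      case 2
      then show ?thesis using edge_weight_insert_edge_loss_at_other[OF e] unfolding g_def c_def d'_def by simp
    next
      case 3
      then show ?thesis using edge_weight_insert_edge_unchanged[OF e] unfolding g_def by simp
    qed
  qed
  have "(\<Sum>e \<in> E. g e) = d * (2 * d + 1) - d' * c"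
    using fin unfolding g_def d_def d'_def by (simp add: sum_subtractf sum_if_mem_edge)
  also have "\<dots> > 0"
  proof (cases "degree E w = degree E u")
    case True
    then show ?thesis using assms unfolding c_def d_def by simp
  next
    case False
    then have "d' < d" using max_at_u \<open>w \<in> V\<close> unfolding d_def d'_def by fastforce
    then have "d' * (2 * d' + 1) < d * (2 * d + 1)"
      by (intro mult_strict_mono) (auto simp: d'_def)
    then show ?thesis using False unfolding c_def by simp
  qed
  finally have "int (cM2 E) < (\<Sum>e \<in> E. int (edge_weight E e) + g e)"
    unfolding cM2_eq_sum_edge_weight by (simp add: sum.distrib)
  also have "\<dots> \<le> (\<Sum>e \<in> E. int (edge_weight (insert {u, w} E) e))"
    by (rule sum_mono) (rule gain)
  also have "\<dots> \<le> int (cM2 (insert {u, w} E))"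
    unfolding cM2_eq_sum_edge_weight using fin non_edge by simp
  finally show ?thesis by simp
qed

end

theorem proposition1:
  fixes n :: nat and V :: "'a set" and E :: "'a set set"
  assumes "n \<ge> 4"
    and "simple_graph V E" and "card V = n" and "connected_graph V E"
    and "\<And>(V' :: nat set) E'. simple_graph V' E' \<Longrightarrow> card V' = n \<Longrightarrow>
           connected_graph V' E' \<Longrightarrow> cM2 E' \<le> cM2 E"
  shows "max_degree V E = n - 1"
proof -
  note graph = assms(2) and connected = assms(4) and maximal = assms(5)
  have "finite V" using graph by (rule simple_graph_finite_vertices)
  then obtain u where u: "u \<in> V" "max_degree V E = degree E u"
    and max_at_u: "\<forall>x \<in> V. degree E x \<le> degree E u"
    using connected unfolding connected_graph_def by (metis max_degree_attained)
  show ?thesis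
  proof (cases "\<forall>w \<in> V - {u}. {u, w} \<in> E")
    case True
    then show ?thesis using degree_eq_card_minus_one[OF graph u(1)] u(2) assms(3) by simp
  next
    case False
    then obtain w where w: "w \<in> V" "u \<noteq> w" "{u, w} \<notin> E" by blast
    define E' where "E' = insert {u, w} E"
    have graph': "simple_graph V E'" "connected_graph V E'"
      unfolding E'_def using simple_graph_insert_edge[OF graph u(1) w(1,2)]
      by (auto intro: connected_graph_mono[OF connected])
    have "cM2 E < cM2 E'"
      unfolding E'_def using cM2_insert_edge_at_max_degree[OF graph w max_at_u]
        connected_graph_degree_pos[OF connected simple_graph_finite_edges[OF graph] u(1) w(1,2)] .
    moreover obtain h :: "'a \<Rightarrow> nat" where "inj_on h V"
      using \<open>finite V\<close> ex_bij_betw_finite_nat bij_betw_imp_inj_on by blast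
    then have "cM2 ((`) h ` E') \<le> cM2 E"
      using graph' assms(3)
      by (intro maximal[of "h ` V"] simple_graph_image connected_graph_image) (auto simp: card_image)
    ultimately show ?thesis using cM2_image[OF graph'(1) \<open>inj_on h V\<close>] by simp
  qed
qed

end
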